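(* Assume (A1). Let $g:\mathcal X\to\{0,1\}$ and let $u$ be the solution of problem (P) with boundary data $g|_\Gamma$. Let $k$ be the smallest integer strictly larger than $$\frac{2\log 2}{1-\alpha+2\alpha\delta}=\frac{2(p-1)\log 2}{p-2+2\delta}.$$ Then every $x\in\mathcal X\setminus A_k$ is classified correctly, i.e. $g(x)=\mathbb 1_{u(x)\ge 1/2}$.
   Context: $\mathcal X$ is a finite vertex set and $W=(w_{xy})$ a symmetric matrix of nonnegative weights defining a connected graph, with degrees $d_x=\sum_{y}w_{xy}$ and neighbor sets $N_x=\{y\in\mathcal X:w_{xy}>0\}$. For $p\ge2$, $\alpha=1/(p-1)$, and $$\mathcal L_p u(x)=\alpha\,\frac{1}{d_x}\sum_{y}w_{xy}\big(u(x)-u(y)\big)+(1-\alpha)\Big(u(x)-\tfrac12\big(\max_{N_x}u+\min_{N_x}u\big)\Big).$$ $\Gamma\subset\mathcal X$ is the set of labeled vertices. Problem (P): find $u:\mathcal X\to\mathbb R$ with $\mathcal L_pu(x)=0$ for $x\in\mathcal X\setminus\Gamma$ and $u=g$ on $\Gamma$; it has a unique solution. Assumption (A1): $\Gamma\cap N_x\neq\varnothing$ for every $x\in\mathcal X$. $\delta=\min_{x\in\mathcal X}\frac{\sum_{y}w_{xy}\mathbb 1_{y\in\Gamma}}{\sum_{z}w_{xz}}$. The graph distance $\operatorname{dist}(x,y)$ is the number of edges of a shortest path from $x$ to $y$, and $\operatorname{dist}(x,A)=\min_{y\in A}\operatorname{dist}(x,y)$ (taken to be $+\infty$ if $A=\varnothing$).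 For $i=0,1$ let $\mathcal X_i=\{x\in\mathcal X:g(x)=i\}$, and for an integer $m\ge0$, $A_m^i=\{x\in\mathcal X_i:\operatorname{dist}(x,\mathcal X_{1-i})\le m\}$, $A_m=A_m^0\cup A_m^1$. *)

theory Defs
  imports Complex_Main "HOL-Library.Extended_Nat"
begin

definition deg :: "('a::finite \<Rightarrow> 'a \<Rightarrow> real) \<Rightarrow> 'a \<Rightarrow> real" where
  "deg w x = (\<Sum>y\<in>UNIV. w x y)"

definition nbrs :: "('a \<Rightarrow> 'a \<Rightarrow> real) \<Rightarrow> 'a \<Rightarrow> 'a set" where
  "nbrs w x = {y. w x y > 0}"

definition walk :: "('a \<Rightarrow> 'a \<Rightarrow> real) \<Rightarrow> 'a \<Rightarrow> 'a \<Rightarrow> nat \<Rightarrow> bool" where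
  "walk w x y n \<longleftrightarrow> (\<exists>f::nat \<Rightarrow> 'a. f 0 = x \<and> f n = y \<and> (\<forall>i<n. w (f i) (f (Suc i)) > 0))"

definition connected_graph :: "('a \<Rightarrow> 'a \<Rightarrow> real) \<Rightarrow> bool" where
  "connected_graph w \<longleftrightarrow> (\<forall>x y. \<exists>n. walk w x y n)"

definition gdist :: "('a \<Rightarrow> 'a \<Rightarrow> real) \<Rightarrow> 'a \<Rightarrow> 'a \<Rightarrow> nat" where
  "gdist w x y = (LEAST n. walk w x y n)"

text \<open>Distance to a set (infinity for the empty set).\<close>
definition setdist :: "('a \<Rightarrow> 'a \<Rightarrow> real) \<Rightarrow> 'a \<Rightarrow> 'a set \<Rightarrow> enat" where
  "setdist w x A = (INF y\<in>A. enat (gdist w x y))"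

definition Lp :: "real \<Rightarrow> ('a::finite \<Rightarrow> 'a \<Rightarrow> real) \<Rightarrow> ('a \<Rightarrow> real) \<Rightarrow> 'a \<Rightarrow> real" where
  "Lp p w u x = (let \<alpha> = 1 / (p - 1) in
     \<alpha> * (1 / deg w x) * (\<Sum>y\<in>UNIV. w x y * (u x - u y))
     + (1 - \<alpha>) * (u x - (Max (u ` nbrs w x) + Min (u ` nbrs w x)) / 2))"

definition solves_P :: "real \<Rightarrow> ('a::finite \<Rightarrow> 'a \<Rightarrow> real) \<Rightarrow> 'a set \<Rightarrow> ('a \<Rightarrow> real) \<Rightarrow> ('a \<Rightarrow> real) \<Rightarrow> bool" where
  "solves_P p w \<Gamma> g u \<longleftrightarrow> (\<forall>x. x \<notin> \<Gamma> \<longrightarrow> Lp p w u x = 0) \<and> (\<forall>x\<in>\<Gamma>. u x = g x)"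

definition delta :: "('a::finite \<Rightarrow> 'a \<Rightarrow> real) \<Rightarrow> 'a set \<Rightarrow> real" where
  "delta w \<Gamma> = Min (range (\<lambda>x. (\<Sum>y\<in>UNIV. w x y * (if y \<in> \<Gamma> then 1 else 0)) / (\<Sum>z\<in>UNIV. w x z)))"

definition Xset :: "('a \<Rightarrow> real) \<Rightarrow> real \<Rightarrow> 'a set" where
  "Xset g i = {x. g x = i}"

definition Aset_i :: "('a \<Rightarrow> 'a \<Rightarrow> real) \<Rightarrow> ('a \<Rightarrow> real) \<Rightarrow> nat \<Rightarrow> real \<Rightarrow> 'a set" where
  "Aset_i w g m i = {x \<in> Xset g i. setdist w x (Xset g (1 - i)) \<le> enat m}"

definition Aset :: "('a \<Rightarrow> 'a \<Rightarrow> real) \<Rightarrow> ('a \<Rightarrow> real) \<Rightarrow> nat \<Rightarrow> 'a set" where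
  "Aset w g m = Aset_i w g m 0 \<union> Aset_i w g m 1"

end

theory Submission
  imports Defs
begin

text \<open>Writing \<open>\<alpha> = 1/(p-1)\<close>, the equation \<open>\<L>\<^sub>p u = 0\<close> says that \<open>u\<close> is a fixed point of an
averaging operator mixing the weighted mean with the midrange of the neighbours. Hence a
maximum principle gives \<open>u \<le> 1\<close> and \<open>1 - u \<le> 1\<close>. If all labels within distance \<open>k\<close> of \<open>x\<close>
vanish, every unlabelled vertex along the way has labelled neighbours of total relative
weight at least \<open>\<delta>\<close> with value \<open>0\<close>, so one averaging step contracts a bound \<open>Q\<close> to
\<open>(1 - c) Q\<close> with \<open>c = (1 - \<alpha> + 2 \<alpha> \<delta>) / 2\<close>. After \<open>k\<close> steps \<open>u x \<le> (1 - c)\<^sup>k \<le> e\<^sup>-\<^sup>c\<^sup>k < 1/2\<close>.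
Labels equal to \<open>1\<close> are handled by applying this to \<open>1 - u\<close>, which solves the problem with
labels \<open>1 - g\<close>.\<close>

definition lp_mean :: "real \<Rightarrow> ('a::finite \<Rightarrow> 'a \<Rightarrow> real) \<Rightarrow> ('a \<Rightarrow> real) \<Rightarrow> 'a \<Rightarrow> real" where
  "lp_mean \<alpha> w v y = \<alpha> / deg w y * (\<Sum>z\<in>UNIV. w y z * v z)
     + (1 - \<alpha>) * (Max (v ` nbrs w y) + Min (v ` nbrs w y)) / 2"

definition lp_harmonic :: "real \<Rightarrow> ('a::finite \<Rightarrow> 'a \<Rightarrow> real) \<Rightarrow> 'a set \<Rightarrow> ('a \<Rightarrow> real) \<Rightarrow> bool" where
  "lp_harmonic \<alpha> w \<Gamma> v \<longleftrightarrow> (\<forall>y. y \<notin> \<Gamma> \<longrightarrow> v y = lp_mean \<alpha> w v y)"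

lemma Lp_eq_diff_lp_mean:
  fixes w :: "'a::finite \<Rightarrow> 'a \<Rightarrow> real"
  assumes "deg w y \<noteq> 0"
  shows "Lp p w u y = u y - lp_mean (1 / (p - 1)) w u y"
proof -
  define \<alpha> where "\<alpha> = 1 / (p - 1)"
  have sum: "(\<Sum>z\<in>UNIV. w y z * (u y - u z)) = deg w y * u y - (\<Sum>z\<in>UNIV. w y z * u z)"
    unfolding deg_def by (simp add: right_diff_distrib sum_subtractf sum_distrib_right)
  have "Lp p w u y = \<alpha> * (1 / deg w y) * (deg w y * u y - (\<Sum>z\<in>UNIV. w y z * u z))
      + (1 - \<alpha>) * (u y - (Max (u ` nbrs w y) + Min (u ` nbrs w y)) / 2)"
    unfolding Lp_def Let_def sum \<alpha>_def ..
  also have "\<dots> = u y - lp_mean \<alpha> w u y"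
    using assms unfolding lp_mean_def by (simp add: field_simps)
  finally show ?thesis
    unfolding \<alpha>_def .
qed

lemma lp_mean_one_minus:
  fixes w :: "'a::finite \<Rightarrow> 'a \<Rightarrow> real"
  assumes "deg w y \<noteq> 0" "nbrs w y \<noteq> {}"
  shows "lp_mean \<alpha> w (\<lambda>z. 1 - v z) y = 1 - lp_mean \<alpha> w v y"
proof -
  define A where "A = v ` nbrs w y"
  have A: "finite A" "A \<noteq> {}"
    unfolding A_def using assms(2) by auto
  have image: "(\<lambda>z. 1 - v z) ` nbrs w y = (\<lambda>t. 1 - t) ` A"
    unfolding A_def by (simp add: image_image)
  have max: "Max ((\<lambda>t. 1 - t) ` A) = 1 - Min A"
  proof (rule Max_eqI)
    show "1 - Min A \<in> (\<lambda>t. 1 - t) ` A"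
      using Min_in[OF A] by (rule imageI)
  qed (use A in auto)
  have min: "Min ((\<lambda>t. 1 - t) ` A) = 1 - Max A"
  proof (rule Min_eqI)
    show "1 - Max A \<in> (\<lambda>t. 1 - t) ` A"
      using Max_in[OF A] by (rule imageI)
  qed (use A in auto)
  have sum: "\<alpha> / deg w y * (\<Sum>z\<in>UNIV. w y z * (1 - v z))
      = \<alpha> - \<alpha> / deg w y * (\<Sum>z\<in>UNIV. w y z * v z)"
    using assms(1) unfolding deg_def by (simp add: right_diff_distrib sum_subtractf field_simps)
  show ?thesis
    unfolding lp_mean_def A_def[symmetric] image max min sum by (simp add: field_simps)
qed

lemma walk_refl: "walk w x x 0"
  unfolding walk_def by (rule exI[of _ "\<lambda>_. x"]) simp

lemma walk_snoc:
  assumes "walk w x y n" "w y z > 0"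
  shows "walk w x z (Suc n)"
proof -
  obtain f where f: "f 0 = x" "f n = y" "\<forall>i<n. w (f i) (f (Suc i)) > 0"
    using assms(1) unfolding walk_def by blast
  have "\<forall>i<Suc n. w ((f(Suc n := z)) i) ((f(Suc n := z)) (Suc i)) > 0"
    using f(2,3) assms(2) by (auto simp: less_Suc_eq)
  with f(1) show ?thesis
    unfolding walk_def by (intro exI[of _ "f(Suc n := z)"]) simp
qed

lemma setdist_le_walk:
  assumes "walk w x z n" "z \<in> A"
  shows "setdist w x A \<le> enat n"
proof -
  have "setdist w x A \<le> enat (gdist w x z)"
    unfolding setdist_def using assms(2) by (rule INF_lower)
  moreover have "gdist w x z \<le> n"
    unfolding gdist_def using assms(1) by (rule Least_le)
  ultimately show ?thesis
    by (simp add: order_trans)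
qed

lemma label_eq_near_if_notin_Aset:
  assumes "x \<notin> Aset w g k" "\<forall>y. g y \<in> {0, 1}" "walk w x z n" "n \<le> k"
  shows "g z = g x"
proof (rule ccontr)
  assume "g z \<noteq> g x"
  moreover have gx: "g x \<in> {0, 1}" and "g z \<in> {0, 1}"
    using assms(2) by blast+
  ultimately have "z \<in> Xset g (1 - g x)"
    unfolding Xset_def by auto
  with assms(3) have "setdist w x (Xset g (1 - g x)) \<le> enat n"
    by (rule setdist_le_walk)
  also have "enat n \<le> enat k"
    using assms(4) by simp
  finally have "x \<in> Aset_i w g k (g x)"
    unfolding Aset_i_def Xset_def by simp
  with gx assms(1) show False
    unfolding Aset_def by (elim insertE) auto
qed

lemma power_one_minus_lt_half:
  fixes c :: real
  assumes "c \<le> 1" "ln 2 < real n * c"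
  shows "(1 - c) ^ n < 1 / 2"
proof -
  have "(1 - c) ^ n \<le> exp (- c) ^ n"
    using assms(1) exp_ge_add_one_self[of "- c"] by (intro power_mono) auto
  also have "\<dots> = exp (- (real n * c))"
    by (metis exp_of_nat_mult mult_minus_right)
  also have "\<dots> < exp (- ln 2)"
    using assms(2) by (subst exp_less_cancel_iff) linarith
  also have "exp (- ln 2) = 1 / (2::real)"
    by (simp add: exp_minus)
  finally show ?thesis .
qed

locale labelled_graph =
  fixes w :: "'a::finite \<Rightarrow> 'a \<Rightarrow> real" and \<Gamma> :: "'a set"
  assumes weight_nonneg: "\<And>x y. 0 \<le> w x y"
    and labelled_nbr: "\<And>x. \<Gamma> \<inter> nbrs w x \<noteq> {}"
begin

lemma obtain_labelled_nbr:
  obtains z where "z \<in> \<Gamma>" "w y z > 0"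
  using labelled_nbr[of y] unfolding nbrs_def by auto

lemma nbrs_nonempty: "nbrs w y \<noteq> {}"
  using labelled_nbr[of y] by auto

lemma weight_le_deg: "w y z \<le> deg w y"
  unfolding deg_def by (rule member_le_sum) (simp_all add: weight_nonneg)

lemma deg_pos: "deg w y > 0"
proof -
  obtain z where "w y z > 0"
    by (rule obtain_labelled_nbr)
  with weight_le_deg[of y z] show ?thesis
    by linarith
qed

lemma labelled_weight_le_deg:
  "(\<Sum>z\<in>UNIV. w y z * (if z \<in> \<Gamma> then 1 else 0)) \<le> deg w y"
  unfolding deg_def by (rule sum_mono) (simp add: weight_nonneg)

lemma labelled_weight_pos:
  "(\<Sum>z\<in>UNIV. w y z * (if z \<in> \<Gamma> then 1 else 0)) > 0"
proof -
  obtain z where "z \<in> \<Gamma>" "w y z > 0"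
    by (rule obtain_labelled_nbr)
  moreover have "w y z * (if z \<in> \<Gamma> then 1 else 0)
      \<le> (\<Sum>z\<in>UNIV. w y z * (if z \<in> \<Gamma> then 1 else 0))"
    by (rule member_le_sum) (simp_all add: weight_nonneg)
  ultimately show ?thesis by simp
qed

lemma delta_mult_deg_le:
  "delta w \<Gamma> * deg w y \<le> (\<Sum>z\<in>UNIV. w y z * (if z \<in> \<Gamma> then 1 else 0))"
proof -
  have "delta w \<Gamma> \<le> (\<Sum>z\<in>UNIV. w y z * (if z \<in> \<Gamma> then 1 else 0)) / deg w y"
    unfolding delta_def deg_def by (rule Min_le) auto
  then show ?thesis
    using deg_pos[of y] by (simp add: pos_le_divide_eq)
qed

lemma delta_pos_le_1: "0 < delta w \<Gamma>" "delta w \<Gamma> \<le> 1"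
proof -
  have "delta w \<Gamma> \<in> range (\<lambda>x. (\<Sum>y\<in>UNIV. w x y * (if y \<in> \<Gamma> then 1 else 0))
      / (\<Sum>z\<in>UNIV. w x z))"
    unfolding delta_def by (rule Min_in) simp_all
  then obtain y where y: "delta w \<Gamma> = (\<Sum>z\<in>UNIV. w y z * (if z \<in> \<Gamma> then 1 else 0)) / deg w y"
    unfolding deg_def by (elim rangeE)
  show "0 < delta w \<Gamma>"
    unfolding y using labelled_weight_pos[of y] deg_pos[of y] by (rule divide_pos_pos)
  show "delta w \<Gamma> \<le> 1"
    unfolding y using labelled_weight_le_deg[of y] deg_pos[of y] by simp
qed

lemma solves_P_lp_harmonic:
  assumes "solves_P p w \<Gamma> g u"
  shows "lp_harmonic (1 / (p - 1)) w \<Gamma> u"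
  unfolding lp_harmonic_def
proof (intro allI impI)
  fix y assume "y \<notin> \<Gamma>"
  with assms have "Lp p w u y = 0"
    unfolding solves_P_def by blast
  then show "u y = lp_mean (1 / (p - 1)) w u y"
    using Lp_eq_diff_lp_mean[of w y p u] deg_pos[of y] by simp
qed

text \<open>The maximum is attained at an unlabelled vertex, where the weighted mean is strictly
smaller because a labelled neighbour lies below the maximum.\<close>

lemma lp_harmonic_le_label_bound:
  assumes \<alpha>: "0 < \<alpha>" "\<alpha> \<le> 1"
    and harmonic: "lp_harmonic \<alpha> w \<Gamma> v"
    and labels: "\<And>y. y \<in> \<Gamma> \<Longrightarrow> v y \<le> B"
  shows "v x \<le> B"
proof (rule ccontr)
  assume "\<not> v x \<le> B"
  define M where "M = Max (range v)"
  have le_M: "v y \<le> M" for y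
    unfolding M_def by simp
  have "M \<in> range v"
    unfolding M_def by (rule Max_in) simp_all
  then obtain y where y: "v y = M"
    by blast
  have B_M: "B < M"
    using \<open>\<not> v x \<le> B\<close> le_M[of x] by linarith
  obtain z where z: "z \<in> \<Gamma>" "w y z > 0"
    by (rule obtain_labelled_nbr)
  have "(\<Sum>z\<in>UNIV. w y z * v z) < (\<Sum>z\<in>UNIV. w y z * M)"
  proof (rule sum_strict_mono_ex1)
    show "\<forall>a\<in>UNIV. w y a * v a \<le> w y a * M"
      using le_M weight_nonneg by (simp add: mult_left_mono)
    have "v z < M"
      using labels[OF z(1)] B_M by linarith
    then show "\<exists>a\<in>UNIV. w y a * v a < w y a * M"
      using z(2) by (intro bexI[of _ z]) simp_all
  qed (rule finite_UNIV)
  also have "\<dots> = deg w y * M"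
    unfolding deg_def by (simp add: sum_distrib_right)
  finally have "\<alpha> / deg w y * (\<Sum>z\<in>UNIV. w y z * v z) < \<alpha> / deg w y * (deg w y * M)"
    using \<alpha> deg_pos[of y] by (intro mult_strict_left_mono) simp_all
  then have mean: "\<alpha> / deg w y * (\<Sum>z\<in>UNIV. w y z * v z) < \<alpha> * M"
    using deg_pos[of y] by simp
  have "Max (v ` nbrs w y) \<le> M" "Min (v ` nbrs w y) \<le> M"
    using nbrs_nonempty[of y] le_M by (auto simp: Min_le_iff)
  then have midrange: "(1 - \<alpha>) * (Max (v ` nbrs w y) + Min (v ` nbrs w y)) / 2 \<le> (1 - \<alpha>) * M"
    using \<alpha> mult_left_mono[of "Max (v ` nbrs w y) + Min (v ` nbrs w y)" "2 * M" "1 - \<alpha>"]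
    by linarith
  have "y \<notin> \<Gamma>"
    using labels[of y] y B_M by fastforce
  with harmonic have "v y = lp_mean \<alpha> w v y"
    unfolding lp_harmonic_def by blast
  moreover have "\<alpha> * M + (1 - \<alpha>) * M = M"
    by (simp add: algebra_simps)
  ultimately have "v y < M"
    using mean midrange unfolding lp_mean_def by linarith
  with y show False by simp
qed

lemma lp_harmonic_one_minus:
  assumes "lp_harmonic \<alpha> w \<Gamma> v"
  shows "lp_harmonic \<alpha> w \<Gamma> (\<lambda>y. 1 - v y)"
  using assms deg_pos[THEN dual_order.strict_implies_not_eq] unfolding lp_harmonic_def
  by (simp add: lp_mean_one_minus nbrs_nonempty)

lemma weighted_sum_le_if_labelled_nbrs_zero:
  assumes "0 \<le> Q"
    and nbr_le: "\<And>z. w y z > 0 \<Longrightarrow> v z \<le> Q"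
    and nbr_zero: "\<And>z. w y z > 0 \<Longrightarrow> z \<in> \<Gamma> \<Longrightarrow> v z = 0"
  shows "(\<Sum>z\<in>UNIV. w y z * v z) \<le> (1 - delta w \<Gamma>) * deg w y * Q"
proof -
  have "(\<Sum>z\<in>UNIV. w y z * v z)
      \<le> (\<Sum>z\<in>UNIV. w y z * Q - Q * (w y z * (if z \<in> \<Gamma> then 1 else 0)))"
  proof (rule sum_mono)
    fix z
    show "w y z * v z \<le> w y z * Q - Q * (w y z * (if z \<in> \<Gamma> then 1 else 0))"
    proof (cases "w y z > 0")
      case True
      then show ?thesis
        using nbr_le[OF True] nbr_zero[OF True] by (cases "z \<in> \<Gamma>") (auto intro: mult_left_mono)
    next
      case False
      then show ?thesis
        using weight_nonneg[of y z] by simp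
    qed
  qed
  also have "\<dots> = deg w y * Q - Q * (\<Sum>z\<in>UNIV. w y z * (if z \<in> \<Gamma> then 1 else 0))"
    unfolding deg_def by (simp add: sum_subtractf sum_distrib_left sum_distrib_right)
  also have "\<dots> \<le> deg w y * Q - Q * (delta w \<Gamma> * deg w y)"
    using delta_mult_deg_le \<open>0 \<le> Q\<close> by (simp add: mult_left_mono)
  finally show ?thesis
    by (simp add: algebra_simps)
qed

definition decay_rate :: "real \<Rightarrow> real" where
  "decay_rate \<alpha> = (1 - \<alpha> + 2 * \<alpha> * delta w \<Gamma>) / 2"

lemma decay_rate_pos_le_1:
  assumes "0 < \<alpha>" "\<alpha> \<le> 1"
  shows "0 < decay_rate \<alpha>" and "decay_rate \<alpha> \<le> 1"
proof -
  have "0 < \<alpha> * delta w \<Gamma>" "\<alpha> * delta w \<Gamma> \<le> \<alpha>"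
    using assms delta_pos_le_1 by (simp_all add: mult_left_le)
  then have "0 < 1 - \<alpha> + 2 * (\<alpha> * delta w \<Gamma>)" "1 - \<alpha> + 2 * (\<alpha> * delta w \<Gamma>) \<le> 2"
    using assms by linarith+
  then show "0 < decay_rate \<alpha>" and "decay_rate \<alpha> \<le> 1"
    unfolding decay_rate_def by (simp_all add: mult.assoc)
qed

lemma ln_2_lt_Least_mult_decay_rate:
  assumes "0 < \<alpha>" "\<alpha> \<le> 1"
  shows "ln 2 < real (LEAST n::nat. real n > 2 * ln 2 / (1 - \<alpha> + 2 * \<alpha> * delta w \<Gamma>))
    * decay_rate \<alpha>"
proof -
  have "2 * ln 2 / (1 - \<alpha> + 2 * \<alpha> * delta w \<Gamma>)
      < real (LEAST n::nat. real n > 2 * ln 2 / (1 - \<alpha> + 2 * \<alpha> * delta w \<Gamma>))"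
    by (rule LeastI_ex) (rule reals_Archimedean2)
  then have "ln 2 / decay_rate \<alpha>
      < real (LEAST n::nat. real n > 2 * ln 2 / (1 - \<alpha> + 2 * \<alpha> * delta w \<Gamma>))"
    unfolding decay_rate_def by (simp add: mult.commute)
  then show ?thesis
    using decay_rate_pos_le_1[OF assms] by (simp add: pos_divide_less_eq)
qed

lemma lp_mean_contraction:
  assumes \<alpha>: "0 \<le> \<alpha>" "\<alpha> \<le> 1" and "0 \<le> Q"
    and nbr_le: "\<And>z. w y z > 0 \<Longrightarrow> v z \<le> Q"
    and nbr_zero: "\<And>z. w y z > 0 \<Longrightarrow> z \<in> \<Gamma> \<Longrightarrow> v z = 0"
  shows "lp_mean \<alpha> w v y \<le> (1 - decay_rate \<alpha>) * Q"
proof -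
  have "\<alpha> / deg w y * (\<Sum>z\<in>UNIV. w y z * v z)
      \<le> \<alpha> / deg w y * ((1 - delta w \<Gamma>) * deg w y * Q)"
    using \<alpha> deg_pos[of y] weighted_sum_le_if_labelled_nbrs_zero[OF \<open>0 \<le> Q\<close> nbr_le nbr_zero]
    by (intro mult_left_mono) auto
  also have "\<dots> = \<alpha> * (1 - delta w \<Gamma>) * Q"
    using deg_pos[of y] by simp
  finally have mean: "\<alpha> / deg w y * (\<Sum>z\<in>UNIV. w y z * v z) \<le> \<alpha> * (1 - delta w \<Gamma>) * Q" .
  obtain z where z: "z \<in> \<Gamma>" "w y z > 0"
    by (rule obtain_labelled_nbr)
  have "Max (v ` nbrs w y) \<le> Q"
    using nbrs_nonempty[of y] nbr_le unfolding nbrs_def by auto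
  moreover have "Min (v ` nbrs w y) \<le> 0"
    using z nbr_zero[OF z(2) z(1)] unfolding nbrs_def by (auto simp: Min_le_iff)
  ultimately have midrange: "(1 - \<alpha>) * (Max (v ` nbrs w y) + Min (v ` nbrs w y)) \<le> (1 - \<alpha>) * Q"
    using \<alpha> by (intro mult_left_mono) auto
  have "(1 - decay_rate \<alpha>) * Q = \<alpha> * (1 - delta w \<Gamma>) * Q + (1 - \<alpha>) * Q / 2"
    unfolding decay_rate_def by (simp add: field_simps)
  with mean midrange show ?thesis
    unfolding lp_mean_def by linarith
qed

text \<open>Induction on \<open>j\<close>: every vertex reached from \<open>x\<close> by a walk of length \<open>n\<close> with
\<open>n + j \<le> k\<close> satisfies \<open>v \<le> (1 - decay_rate \<alpha>)\<^sup>j\<close>.\<close>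

lemma lp_harmonic_decay:
  assumes \<alpha>: "0 < \<alpha>" "\<alpha> \<le> 1"
    and harmonic: "lp_harmonic \<alpha> w \<Gamma> v"
    and le_1: "\<And>y. v y \<le> 1"
    and zero_near: "\<And>z n. walk w x z n \<Longrightarrow> n \<le> k \<Longrightarrow> z \<in> \<Gamma> \<Longrightarrow> v z = 0"
  shows "v x \<le> (1 - decay_rate \<alpha>) ^ k"
proof -
  define q where "q = 1 - decay_rate \<alpha>"
  have "0 \<le> q"
    unfolding q_def using decay_rate_pos_le_1[OF \<alpha>] by simp
  have "walk w x y n \<Longrightarrow> n + j \<le> k \<Longrightarrow> v y \<le> q ^ j" for y n j
  proof (induction j arbitrary: y n)
    case 0
    then show ?case using le_1 by simp
  next
    case (Suc j)
    show ?case
    proof (cases "y \<in> \<Gamma>")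
      case True
      then show ?thesis
        using zero_near[OF Suc.prems(1)] Suc.prems(2) \<open>0 \<le> q\<close> by simp
    next
      case False
      have "0 \<le> q ^ j"
        using \<open>0 \<le> q\<close> by simp
      moreover have "v z \<le> q ^ j" if "w y z > 0" for z
        using Suc.IH[OF walk_snoc[OF Suc.prems(1) that]] Suc.prems(2) by simp
      moreover have "v z = 0" if "w y z > 0" "z \<in> \<Gamma>" for z
        using zero_near[OF walk_snoc[OF Suc.prems(1) that(1)] _ that(2)] Suc.prems(2) by simp
      ultimately have "lp_mean \<alpha> w v y \<le> q * q ^ j"
        using \<alpha> lp_mean_contraction[of \<alpha> "q ^ j" y v, folded q_def] by simp
      with False harmonic show ?thesis
        unfolding lp_harmonic_def by simp
    qed
  qed
  from this[OF walk_refl] show ?thesis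
    unfolding q_def by simp
qed

lemma lp_harmonic_lt_half_if_zero_labels_near:
  assumes \<alpha>: "0 < \<alpha>" "\<alpha> \<le> 1"
    and harmonic: "lp_harmonic \<alpha> w \<Gamma> v"
    and labels: "\<And>y. y \<in> \<Gamma> \<Longrightarrow> v y \<le> 1"
    and zero_near: "\<And>z n. walk w x z n \<Longrightarrow> n \<le> k \<Longrightarrow> z \<in> \<Gamma> \<Longrightarrow> v z = 0"
    and k: "ln 2 < real k * decay_rate \<alpha>"
  shows "v x < 1 / 2"
proof -
  have "v x \<le> (1 - decay_rate \<alpha>) ^ k"
    using lp_harmonic_le_label_bound[OF \<alpha> harmonic labels] zero_near
    by (rule lp_harmonic_decay[OF \<alpha> harmonic])
  also have "\<dots> < 1 / 2"
    using decay_rate_pos_le_1[OF \<alpha>] k by (intro power_one_minus_lt_half)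
  finally show ?thesis .
qed

end

theorem mainTheorem6:
  fixes w :: "'a::finite \<Rightarrow> 'a \<Rightarrow> real"
    and \<Gamma> :: "'a set" and g u :: "'a \<Rightarrow> real" and p :: real and k :: nat
  assumes p: "p \<ge> 2"
    and w_nonneg: "\<forall>x y. w x y \<ge> 0"
    and w_sym: "\<forall>x y. w x y = w y x"
    and conn: "connected_graph w"
    and A1: "\<forall>x. \<Gamma> \<inter> nbrs w x \<noteq> {}"
    and g01: "\<forall>x. g x \<in> {0, 1}"
    and sol: "solves_P p w \<Gamma> g u"
    and k_def: "k = (LEAST n::nat. real n > 2 * ln 2 / (1 - 1 / (p - 1) + 2 * (1 / (p - 1)) * delta w \<Gamma>))"
  shows "\<forall>x. x \<notin> Aset w g k \<longrightarrow> g x = (if u x \<ge> 1/2 then 1 else 0)"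
proof (intro allI impI)
  fix x assume x: "x \<notin> Aset w g k"
  interpret labelled_graph w \<Gamma>
    using w_nonneg A1 by unfold_locales auto
  define \<alpha> where "\<alpha> = 1 / (p - 1)"
  have \<alpha>: "0 < \<alpha>" "\<alpha> \<le> 1"
    unfolding \<alpha>_def using p by auto
  have harmonic: "lp_harmonic \<alpha> w \<Gamma> u"
    unfolding \<alpha>_def using sol by (rule solves_P_lp_harmonic)
  have k: "ln 2 < real k * decay_rate \<alpha>"
    using ln_2_lt_Least_mult_decay_rate[OF \<alpha>] unfolding k_def \<alpha>_def .
  have u_eq_g: "u y = g y" if "y \<in> \<Gamma>" for y
    using sol that unfolding solves_P_def by blast
  have labels: "0 \<le> u y \<and> u y \<le> 1" if "y \<in> \<Gamma>" for y
    using u_eq_g[OF that] g01[rule_format, of y] by auto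
  have near: "u z = g x" if "walk w x z n" "n \<le> k" "z \<in> \<Gamma>" for z n
    using label_eq_near_if_notin_Aset[OF x g01 that(1,2)] u_eq_g[OF that(3)] by simp
  from g01 consider "g x = 0" | "g x = 1" by blast
  then show "g x = (if u x \<ge> 1/2 then 1 else 0)"
  proof cases
    case 1
    have "u x < 1 / 2"
      using labels near 1 by (intro lp_harmonic_lt_half_if_zero_labels_near[OF \<alpha> harmonic _ _ k]) auto
    with 1 show ?thesis by simp
  next
    case 2
    have "1 - u x < 1 / 2"
      using labels near 2
      by (intro lp_harmonic_lt_half_if_zero_labels_near[OF \<alpha> lp_harmonic_one_minus[OF harmonic] _ _ k]) auto
    with 2 show ?thesis by simp
  qed
qed

end
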